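(* Let $R$ be a regular ring with unity, let $E$ be the biordered set of idempotents of $R$, and for $e\in E$ put $e'=1-e$. If $e,f\in E$ satisfy $f\,\omega\,e'$, then there is exactly one element of $E$ that belongs to both sandwich sets $S(e',f')$ and $S(f',e')$.
   Context: A ring is regular if for every $x$ there is $y$ with $xyx=x$. The biordered set $E$ of $R$ is the set of idempotents with the partial product $ef$ (computed in $R$) defined when $\{ef,fe\}\cap\{e,f\}\ne\emptyset$. In $E$: $f\,\omega^l\,e$ iff $fe=f$; $f\,\omega^r\,e$ iff $ef=f$; $\omega=\omega^l\cap\omega^r$; $M(e,f)=\{g\in E: ge=g,\ fg=g\}$; for $g,h\in M(e,f)$, $g\preceq h$ iff $eg\,\omega^r\,eh$ and $gf\,\omega^l\,hf$; and $S(e,f)=\{h\in M(e,f): g\preceq h\text{ for all }g\in M(e,f)\}$. *)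

theory Defs
  imports Main
begin

definition regular_ring :: "'a::ring_1 itself \<Rightarrow> bool" where
  "regular_ring _ \<longleftrightarrow> (\<forall>x::'a. \<exists>y. x * y * x = x)"

definition idems :: "'a::ring_1 set" where
  "idems = {e. e * e = e}"

definition omega_l :: "'a::ring_1 \<Rightarrow> 'a \<Rightarrow> bool" where
  "omega_l f e \<longleftrightarrow> f \<in> idems \<and> e \<in> idems \<and> f * e = f"

definition omega_r :: "'a::ring_1 \<Rightarrow> 'a \<Rightarrow> bool" where
  "omega_r f e \<longleftrightarrow> f \<in> idems \<and> e \<in> idems \<and> e * f = f"

definition omega :: "'a::ring_1 \<Rightarrow> 'a \<Rightarrow> bool" where
  "omega f e \<longleftrightarrow> omega_l f e \<and> omega_r f e"

definition Mset :: "'a::ring_1 \<Rightarrow> 'a \<Rightarrow> 'a set" where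
  "Mset e f = {g \<in> idems. g * e = g \<and> f * g = g}"

definition sand_le :: "'a::ring_1 \<Rightarrow> 'a \<Rightarrow> 'a \<Rightarrow> 'a \<Rightarrow> bool" where
  "sand_le e f g h \<longleftrightarrow> omega_r (e * g) (e * h) \<and> omega_l (g * f) (h * f)"

definition Sset :: "'a::ring_1 \<Rightarrow> 'a \<Rightarrow> 'a set" where
  "Sset e f = {h \<in> Mset e f. \<forall>g \<in> Mset e f. sand_le e f g h}"

end

theory Submission
  imports Defs
begin

(* Since f \<omega> e', the idempotents e and f are orthogonal, so e' and f' commute.
   For commuting idempotents a, b the product ab is the greatest element of M(a,b)
   under \<preceq>, hence lies in S(a,b), and likewise in S(b,a).  Uniqueness holds for
   arbitrary idempotents: two elements of S(a,b) that are also in M(b,a) are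
   \<preceq>-equivalent, and the two resulting identities force them to be equal. *)

lemma complement_idem:
  fixes e :: "'a::ring_1"
  assumes "e * e = e"
  shows "(1 - e) * (1 - e) = 1 - e"
  using assms by (simp add: algebra_simps)

lemma complements_commute:
  fixes a b :: "'a::ring_1"
  assumes "a * b = b * a"
  shows "(1 - a) * (1 - b) = (1 - b) * (1 - a)"
  using assms by (simp add: algebra_simps)

lemma omega_complement_orthogonal:
  fixes e f :: "'a::ring_1"
  assumes "omega f (1 - e)"
  shows "e * f = 0" and "f * e = 0"
  using assms by (auto simp: omega_def omega_l_def omega_r_def algebra_simps)

lemma commuting_idems_prod_in_Sset:
  fixes a b :: "'a::ring_1"
  assumes a: "a * a = a" and b: "b * b = b" and comm: "a * b = b * a"
  shows "a * b \<in> Sset a b"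
proof -
  have ab_idem: "a * b * (a * b) = a * b"
    by (metis a b comm mult.assoc)
  have a_ab: "a * (a * b) = a * b" and ab_b: "a * b * b = a * b"
    by (metis a mult.assoc) (metis b mult.assoc)
  have "a * b * a = a * b" by (metis a comm mult.assoc)
  with ab_idem a_ab comm have ab_M: "a * b \<in> Mset a b"
    by (simp add: Mset_def idems_def mult.assoc)
  have "sand_le a b g (a * b)" if "g \<in> Mset a b" for g
  proof -
    from that have gg: "g * g = g" and ga: "g * a = g" and bg: "b * g = g"
      by (auto simp: Mset_def idems_def)
    have "a * g * (a * g) = a * g" by (metis ga gg mult.assoc)
    moreover have "a * (a * b) * (a * g) = a * g"
      by (metis a_ab ga bg a comm mult.assoc)
    moreover have "g * b * (g * b) = g * b" by (metis bg gg mult.assoc)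
    moreover have "g * b * (a * b * b) = g * b"
      by (metis ab_b ga bg b comm mult.assoc)
    ultimately show ?thesis
      using a_ab ab_b ab_idem by (simp add: sand_le_def omega_r_def omega_l_def idems_def)
  qed
  with ab_M show ?thesis by (simp add: Sset_def)
qed

lemma Sset_inter_Mset_unique:
  fixes a b :: "'a::ring_1"
  assumes h: "h \<in> Sset a b" "h \<in> Mset b a"
    and k: "k \<in> Sset a b" "k \<in> Mset b a"
  shows "h = k"
proof -
  have "sand_le a b k h" "sand_le a b h k"
    using h k by (auto simp: Sset_def)
  then have "k * b * (h * b) = k * b" and "a * k * (a * h) = a * h"
    by (auto simp: sand_le_def omega_r_def omega_l_def)
  moreover have "a * h = h" "a * k = k" "h * b = h" "k * b = k"
    using h k by (auto simp: Mset_def)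
  ultimately have "k * h = k" and "k * h = h"
    by simp_all
  then show ?thesis by simp
qed

theorem proposition2p4:
  fixes e f :: "'a::ring_1"
  assumes "regular_ring TYPE('a)"
    and "e \<in> idems" and "f \<in> idems"
    and "omega f (1 - e)"
  shows "\<exists>!h. h \<in> Sset (1 - e) (1 - f) \<and> h \<in> Sset (1 - f) (1 - e)"
proof -
  let ?a = "1 - e" and ?b = "1 - f"
  have a: "?a * ?a = ?a" and b: "?b * ?b = ?b"
    using assms(2,3) by (simp_all add: idems_def complement_idem)
  have comm: "?a * ?b = ?b * ?a"
    using complements_commute[of e f] omega_complement_orthogonal[OF assms(4)] by simp
  have in_S_ab: "?a * ?b \<in> Sset ?a ?b"
    using commuting_idems_prod_in_Sset[OF a b comm] .
  moreover have in_S_ba: "?a * ?b \<in> Sset ?b ?a"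
    using commuting_idems_prod_in_Sset[OF b a comm[symmetric]] comm by simp
  moreover have "k = ?a * ?b" if "k \<in> Sset ?a ?b" "k \<in> Sset ?b ?a" for k
    using Sset_inter_Mset_unique[of k ?a ?b "?a * ?b"] that in_S_ab in_S_ba
    by (simp add: Sset_def)
  ultimately show ?thesis by blast
qed

end
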